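(* For $\vec a\in\mathcal M$, $\vec\xi\in T_{\vec a}\mathcal M$ and $\vec\omega\in\mathcal H\times\mathcal H$, the map $C_{\vec\xi}$ satisfies $C_{\vec\xi}(\vec\omega)=\vec\xi\circ\eta(\vec\omega)$.
   Context: Fix $m\ge1$, positive integers $n_0,\dots,n_m$, nonzero integers $d_1,\dots,d_m$; $D_1,\dots,D_m\subset\mathbb C$ pairwise disjoint closed disks, $\gamma_i=\partial D_i$ positively oriented, $\mathbf D^{int}=\bigcup(D_i\setminus\gamma_i)$, $\mathbf D^{ext}=\mathbb P^1\setminus\bigcup D_i$; $\mathcal H$ = germs of functions holomorphic near $\bigcup\gamma_i$; $f=f_++f_-$, $f_+(z)=\frac1{2\pi\mathrm i}\sum_s\oint_{\gamma_s}\frac{f(p)}{p-z}dp$ ($z$ inside), $f_-=-(\text{same})$ ($z$ outside), $f_-(\infty)=0$. $\mathcal M$: pairs $\vec a=(a,\hat a)\in\mathcal H\times\mathcal H$, $a$ meromorphic on $\mathbf D^{ext}$, only pole $\infty$, $a=z^{n_0}+a_{n_0-2}z^{n_0-2}+\cdots$; $\hat a$ meromorphic on $\mathbf D^{int}$, only poles $\varphi_j\in D_j\setminus\gamma_j$, $\hat a=\hat a_{j,-n_j}(z-\varphi_j)^{-n_j}+\cdots$, $\hat a_{j,-n_j}\ne0$; $a-\hat a=w_j^{d_j}$ on $\gamma_j$, $w_j$ holomorphic near $\gamma_j$, $w_j'\ne0$, $w_j(\gamma_j)$ winding once about $0$. Tangent vectors $X\leftrightarrow(\partial_Xa,\partial_X\hat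 a)$; $'=\partial_z$. $\eta(\omega,\hat\omega)=(a'(\omega+\hat\omega)_--(\omega a'+\hat\omega\hat a')_-,-\hat a'(\omega+\hat\omega)_++(\omega a'+\hat\omega\hat a')_+)$ (surjective onto $T_{\vec a}\mathcal M$). Product on $\mathcal H\times\mathcal H$: $(\omega_1,\hat\omega_1)\circ(\omega_2,\hat\omega_2)=(\omega_2(\omega_1a')_+-\omega_1(\omega_2a')_--\omega_2(\hat\omega_1\hat a')_--\omega_1(\hat\omega_2\hat a')_-,\ \hat\omega_2(\hat\omega_1\hat a')_+-\hat\omega_1(\hat\omega_2\hat a')_-+\hat\omega_1(\omega_2a')_++\hat\omega_2(\omega_1a')_+)$; product on $T_{\vec a}\mathcal M$: $\vec\xi_1\circ\vec\xi_2=\eta(\vec\omega_1\circ\vec\omega_2)$ for any $\vec\omega_\nu$ with $\eta(\vec\omega_\nu)=\vec\xi_\nu$. For $\vec\xi=(\xi,\hat\xi)$: $C_{\vec\xi}(\omega,\hat\omega)=\big(a'(\omega\xi+\hat\omega\hat\xi)_--\xi(\omega a'+\hat\omega\hat a')_-,\ -\hat a'(\omega\xi+\hat\omega\hat\xi)_++\hat\xi(\omega a'+\hat\omega\hat a')_+\big)$. *)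

theory Defs
  imports "HOL-Complex_Analysis.Complex_Analysis" "HOL-Library.Landau_Symbols"
begin

definition Gam :: "nat \<Rightarrow> (nat \<Rightarrow> complex) \<Rightarrow> (nat \<Rightarrow> real) \<Rightarrow> complex set" where
  "Gam m c r = (\<Union>s\<in>{1..m}. sphere (c s) (r s))"

definition Dint :: "nat \<Rightarrow> (nat \<Rightarrow> complex) \<Rightarrow> (nat \<Rightarrow> real) \<Rightarrow> complex set" where
  "Dint m c r = (\<Union>s\<in>{1..m}. ball (c s) (r s))"

definition Dext :: "nat \<Rightarrow> (nat \<Rightarrow> complex) \<Rightarrow> (nat \<Rightarrow> real) \<Rightarrow> complex set" where
  "Dext m c r = - (\<Union>s\<in>{1..m}. cball (c s) (r s))"

definition inH :: "nat \<Rightarrow> (nat \<Rightarrow> complex) \<Rightarrow> (nat \<Rightarrow> real) \<Rightarrow> (complex \<Rightarrow> complex) \<Rightarrow> bool" where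
  "inH m c r f \<longleftrightarrow> (\<exists>U. open U \<and> Gam m c r \<subseteq> U \<and> f holomorphic_on U)"

definition germ_eq :: "nat \<Rightarrow> (nat \<Rightarrow> complex) \<Rightarrow> (nat \<Rightarrow> real) \<Rightarrow>
    (complex \<Rightarrow> complex) \<Rightarrow> (complex \<Rightarrow> complex) \<Rightarrow> bool" where
  "germ_eq m c r f g \<longleftrightarrow> (\<exists>U. open U \<and> Gam m c r \<subseteq> U \<and> (\<forall>z\<in>U. f z = g z))"

definition germ_eq2 :: "nat \<Rightarrow> (nat \<Rightarrow> complex) \<Rightarrow> (nat \<Rightarrow> real) \<Rightarrow>
    (complex \<Rightarrow> complex) \<times> (complex \<Rightarrow> complex) \<Rightarrow> (complex \<Rightarrow> complex) \<times> (complex \<Rightarrow> complex) \<Rightarrow> bool" where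
  "germ_eq2 m c r F G \<longleftrightarrow> germ_eq m c r (fst F) (fst G) \<and> germ_eq m c r (snd F) (snd G)"

definition CI :: "nat \<Rightarrow> (nat \<Rightarrow> complex) \<Rightarrow> (nat \<Rightarrow> real) \<Rightarrow> (complex \<Rightarrow> complex) \<Rightarrow> complex \<Rightarrow> complex" where
  "CI m c r f z = (1 / (2 * pi * \<i>)) *
      (\<Sum>s\<in>{1..m}. contour_integral (circlepath (c s) (r s)) (\<lambda>p. f p / (p - z)))"

text \<open>The projections f_+ and f_-, as germs near the circles: given by the Cauchy integral on
  their natural side, by the boundary limit on the circles, and by f = f_+ + f_- on the other side.\<close>
definition proj_plus :: "nat \<Rightarrow> (nat \<Rightarrow> complex) \<Rightarrow> (nat \<Rightarrow> real) \<Rightarrow> (complex \<Rightarrow> complex) \<Rightarrow> complex \<Rightarrow> complex" where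
  "proj_plus m c r f z =
     (if z \<in> Dint m c r then CI m c r f z
      else if z \<in> Gam m c r then Lim (at z within Dint m c r) (CI m c r f)
      else f z + CI m c r f z)"

definition proj_minus :: "nat \<Rightarrow> (nat \<Rightarrow> complex) \<Rightarrow> (nat \<Rightarrow> real) \<Rightarrow> (complex \<Rightarrow> complex) \<Rightarrow> complex \<Rightarrow> complex" where
  "proj_minus m c r f z =
     (if z \<in> Dext m c r then - CI m c r f z
      else if z \<in> Gam m c r then Lim (at z within Dext m c r) (\<lambda>w. - CI m c r f w)
      else f z - CI m c r f z)"

definition inM :: "nat \<Rightarrow> (nat \<Rightarrow> nat) \<Rightarrow> (nat \<Rightarrow> int) \<Rightarrow> (nat \<Rightarrow> complex) \<Rightarrow> (nat \<Rightarrow> real) \<Rightarrow>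
    (complex \<Rightarrow> complex) \<Rightarrow> (complex \<Rightarrow> complex) \<Rightarrow> bool" where
  "inM m n d c r a ah \<longleftrightarrow>
     (\<exists>U. open U \<and> - Dint m c r \<subseteq> U \<and> a holomorphic_on U) \<and>
     (\<lambda>z. a z - z ^ n 0) \<in> O[at_infinity](\<lambda>z. z powi (int (n 0) - 2)) \<and>
     (\<exists>\<phi>. (\<forall>j\<in>{1..m}. \<phi> j \<in> ball (c j) (r j)) \<and>
        (\<exists>U. open U \<and> (\<Union>j\<in>{1..m}. cball (c j) (r j)) \<subseteq> U \<and>
             ah holomorphic_on (U - \<phi> ` {1..m})) \<and>
        (\<forall>j\<in>{1..m}. \<exists>h e. e > 0 \<and> h holomorphic_on ball (\<phi> j) e \<and> h (\<phi> j) \<noteq> 0 \<and>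
             (\<forall>z\<in>ball (\<phi> j) e - {\<phi> j}. ah z = h z / (z - \<phi> j) ^ n j))) \<and>
     (\<forall>j\<in>{1..m}. \<exists>w V. open V \<and> sphere (c j) (r j) \<subseteq> V \<and> w holomorphic_on V \<and>
        (\<forall>z\<in>V. deriv w z \<noteq> 0 \<and> w z \<noteq> 0 \<and> a z - ah z = w z powi d j) \<and>
        winding_number (w \<circ> circlepath (c j) (r j)) 0 = 1)"

definition eta :: "nat \<Rightarrow> (nat \<Rightarrow> complex) \<Rightarrow> (nat \<Rightarrow> real) \<Rightarrow>
    (complex \<Rightarrow> complex) \<Rightarrow> (complex \<Rightarrow> complex) \<Rightarrow>
    (complex \<Rightarrow> complex) \<times> (complex \<Rightarrow> complex) \<Rightarrow> (complex \<Rightarrow> complex) \<times> (complex \<Rightarrow> complex)" where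
  "eta m c r a ah W =
     (let w = fst W; wh = snd W;
          s = (\<lambda>z. w z + wh z); t = (\<lambda>z. w z * deriv a z + wh z * deriv ah z)
      in (\<lambda>z. deriv a z * proj_minus m c r s z - proj_minus m c r t z,
          \<lambda>z. - deriv ah z * proj_plus m c r s z + proj_plus m c r t z))"

definition prodH :: "nat \<Rightarrow> (nat \<Rightarrow> complex) \<Rightarrow> (nat \<Rightarrow> real) \<Rightarrow>
    (complex \<Rightarrow> complex) \<Rightarrow> (complex \<Rightarrow> complex) \<Rightarrow>
    (complex \<Rightarrow> complex) \<times> (complex \<Rightarrow> complex) \<Rightarrow> (complex \<Rightarrow> complex) \<times> (complex \<Rightarrow> complex) \<Rightarrow>
    (complex \<Rightarrow> complex) \<times> (complex \<Rightarrow> complex)" where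
  "prodH m c r a ah W1 W2 =
     (let w1 = fst W1; wh1 = snd W1; w2 = fst W2; wh2 = snd W2;
          P = proj_plus m c r; Q = proj_minus m c r
      in (\<lambda>z. w2 z * P (\<lambda>p. w1 p * deriv a p) z - w1 z * Q (\<lambda>p. w2 p * deriv a p) z
              - w2 z * Q (\<lambda>p. wh1 p * deriv ah p) z - w1 z * Q (\<lambda>p. wh2 p * deriv ah p) z,
          \<lambda>z. wh2 z * P (\<lambda>p. wh1 p * deriv ah p) z - wh1 z * Q (\<lambda>p. wh2 p * deriv ah p) z
              + wh1 z * P (\<lambda>p. w2 p * deriv a p) z + wh2 z * P (\<lambda>p. w1 p * deriv a p) z))"

definition Cxi :: "nat \<Rightarrow> (nat \<Rightarrow> complex) \<Rightarrow> (nat \<Rightarrow> real) \<Rightarrow>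
    (complex \<Rightarrow> complex) \<Rightarrow> (complex \<Rightarrow> complex) \<Rightarrow>
    (complex \<Rightarrow> complex) \<times> (complex \<Rightarrow> complex) \<Rightarrow> (complex \<Rightarrow> complex) \<times> (complex \<Rightarrow> complex) \<Rightarrow>
    (complex \<Rightarrow> complex) \<times> (complex \<Rightarrow> complex)" where
  "Cxi m c r a ah X W =
     (let x = fst X; xh = snd X; w = fst W; wh = snd W;
          s = (\<lambda>z. w z * x z + wh z * xh z); t = (\<lambda>z. w z * deriv a z + wh z * deriv ah z)
      in (\<lambda>z. deriv a z * proj_minus m c r s z - x z * proj_minus m c r t z,
          \<lambda>z. - deriv ah z * proj_plus m c r s z + xh z * proj_plus m c r t z))"

end

theory Submission
  imports Defs
begin

(* Every germ f near the circles splits as f = f_+ + f_-, where f_+ continues holomorphically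
   over the closed disks and f_- over the rest of the sphere with f_-(oo) = 0: near the s-th
   circle, f_+ is the Cauchy integral with that circle pushed slightly outwards.  By Liouville
   the splitting is unique, so f_+ and f_- can be read off from any decomposition of this kind.

   Put S = w1 + wh1, T1 = w1 a' + wh1 ah', T = w a' + wh ah', xi = eta(w1, wh1) = (x, xh) and
   (w1, wh1) o (w, wh) = (v, vh).  Using only g = g_+ + g_- for the products entering x, xh, v, vh,
   two ring identities hold near the circles:
     w x + wh xh - (v + vh) = S_- T_- - S_+ T_+,      v a' + vh ah' = T1_+ T_+ - T1_- T_-.
   Products of plus (minus) germs are again plus (minus) germs, so uniqueness gives the plus and
   minus parts of both left-hand sides, and substituting them into the definitions of C_xi(w, wh)
   and eta(v, vh) makes the two germs equal. *)

section \<open>Cauchy integrals over a circle\<close>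

lemma holomorphic_on_cauchy_integral_circlepath:
  assumes "continuous_on (sphere z \<rho>) f" "\<rho> > 0"
  shows "(\<lambda>w. contour_integral (circlepath z \<rho>) (\<lambda>u. f u / (u - w))) holomorphic_on (- sphere z \<rho>)"
proof -
  have "(\<lambda>w. contour_integral (circlepath z \<rho>) (\<lambda>u. f u / (u - w))) field_differentiable at w"
    if w: "w \<in> - sphere z \<rho>" for w
  proof -
    have int: "((\<lambda>u. f u / (u - w') ^ 1) has_contour_integral
                contour_integral (circlepath z \<rho>) (\<lambda>u. f u / (u - w'))) (circlepath z \<rho>)"
      if "w' \<in> UNIV - path_image (circlepath z \<rho>)" for w'
    proof -
      have "continuous_on (path_image (circlepath z \<rho>)) (\<lambda>u. f u / (u - w'))"
        using that assms by (auto intro!: continuous_intros)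
      then show ?thesis
        using has_contour_integral_integral[OF contour_integrable_continuous_circlepath] by simp
    qed
    have "((\<lambda>w. contour_integral (circlepath z \<rho>) (\<lambda>u. f u / (u - w))) has_field_derivative
       (of_nat 1 * contour_integral (circlepath z \<rho>) (\<lambda>u. f u / (u - w) ^ Suc 1))) (at w)"
      by (rule Cauchy_next_derivative(2)[where S=UNIV and B="2*pi*\<bar>\<rho>\<bar>" and k=1, OF _ _ int])
         (use assms w in \<open>auto simp: vector_derivative_circlepath norm_mult\<close>)
    then show ?thesis unfolding field_differentiable_def by blast
  qed
  then show ?thesis
    by (simp add: holomorphic_on_open open_Compl[OF closed_sphere] field_differentiable_def)
qed

lemma cauchy_integral_circlepath_tendsto_0:
  assumes "continuous_on (sphere z \<rho>) f" "\<rho> > 0"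
  shows "((\<lambda>w. contour_integral (circlepath z \<rho>) (\<lambda>u. f u / (u - w))) \<longlongrightarrow> 0) at_infinity"
proof -
  obtain B where B: "B \<ge> 0" "\<And>u. u \<in> sphere z \<rho> \<Longrightarrow> norm (f u) \<le> B"
    using compact_continuous_image[OF assms(1) compact_sphere]
    by (metis compact_imp_bounded bounded_pos image_eqI less_imp_le)
  define K where "K = norm z + \<rho>"
  have far: "norm w - K \<le> norm (u - w)" if "u \<in> sphere z \<rho>" for u w
    using that norm_triangle_ineq2[of w u] norm_triangle_ineq[of z "u - z"]
    by (auto simp: K_def dist_norm norm_minus_commute)
  have bound: "\<forall>\<^sub>F w in at_infinity. norm (contour_integral (circlepath z \<rho>) (\<lambda>u. f u / (u - w)))
      \<le> B / (norm w - K) * (2 * pi * \<rho>)"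
    unfolding eventually_at_infinity
  proof (intro exI allI impI)
    fix w :: complex assume "K + 1 \<le> norm w"
    then have D: "norm w - K > 0" by simp
    have "w \<notin> sphere z \<rho>" using far[of w w] D by auto
    then have "continuous_on (path_image (circlepath z \<rho>)) (\<lambda>u. f u / (u - w))"
      using assms by (auto intro!: continuous_intros)
    then show "norm (contour_integral (circlepath z \<rho>) (\<lambda>u. f u / (u - w)))
        \<le> B / (norm w - K) * (2 * pi * \<rho>)"
    proof (rule has_contour_integral_bound_circlepath[OF has_contour_integral_integral[OF
          contour_integrable_continuous_circlepath]])
      fix u assume "norm (u - z) = \<rho>"
      then have u: "u \<in> sphere z \<rho>" by (simp add: dist_norm norm_minus_commute)
      show "norm (f u / (u - w)) \<le> B / (norm w - K)"
        unfolding norm_divide using B u far[OF u, of w] D by (intro frac_le) auto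
    qed (use B D assms in auto)
  qed
  have "filterlim (\<lambda>w. norm w - K) at_top at_infinity"
    using filterlim_tendsto_add_at_top[OF tendsto_const filterlim_norm_at_top, of "- K"] by simp
  from tendsto_inverse_0_at_top[OF this]
  have "((\<lambda>w. B * (2 * pi * \<rho>) * inverse (norm w - K)) \<longlongrightarrow> 0) at_infinity"
    by (intro tendsto_mult_right_zero) (simp add: o_def)
  then have "((\<lambda>w. B / (norm w - K) * (2 * pi * \<rho>)) \<longlongrightarrow> 0) at_infinity"
    by (simp add: divide_inverse ac_simps)
  with bound show ?thesis by (rule Lim_null_comparison)
qed

lemma homotopic_loops_circlepath_radii:
  assumes "0 < \<rho>1" "\<rho>1 \<le> \<rho>2" "\<And>p. \<rho>1 \<le> norm (p - c) \<Longrightarrow> norm (p - c) \<le> \<rho>2 \<Longrightarrow> p \<in> S"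
  shows "homotopic_loops S (circlepath c \<rho>1) (circlepath c \<rho>2)"
proof (rule homotopic_loops_linear)
  fix t :: real assume t: "t \<in> {0..1}"
  define e where "e = exp (2 * of_real pi * \<i> * of_real t)"
  have ne: "norm e = 1" unfolding e_def by (simp add: norm_exp_eq_Re)
  show "closed_segment (circlepath c \<rho>1 t) (circlepath c \<rho>2 t) \<subseteq> S"
  proof
    fix x assume "x \<in> closed_segment (circlepath c \<rho>1 t) (circlepath c \<rho>2 t)"
    then obtain u where u: "0 \<le> u" "u \<le> 1" and x: "x = (1 - u) *\<^sub>R (c + \<rho>1 * e) + u *\<^sub>R (c + \<rho>2 * e)"
      unfolding closed_segment_def circlepath e_def by auto
    have "x - c = complex_of_real ((1 - u) * \<rho>1 + u * \<rho>2) * e"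
      unfolding x by (simp add: scaleR_conv_of_real algebra_simps)
    moreover have "(1 - u) * \<rho>1 + u * \<rho>2 \<ge> 0" using u assms by simp
    ultimately have nx: "norm (x - c) = (1 - u) * \<rho>1 + u * \<rho>2"
      using ne by (simp only: norm_mult norm_of_real) simp
    have "u * (\<rho>2 - \<rho>1) \<ge> 0" "(1 - u) * (\<rho>2 - \<rho>1) \<ge> 0" using u assms(2) by simp_all
    then show "x \<in> S" using assms(3) nx by (simp add: algebra_simps)
  qed
qed auto

lemma contour_integral_circlepath_enlarge_inside:
  assumes "open U" "f holomorphic_on U" "0 < \<rho>1" "\<rho>1 \<le> \<rho>2"
    and annulus: "\<And>p. \<rho>1 \<le> norm (p - c) \<Longrightarrow> norm (p - c) \<le> \<rho>2 \<Longrightarrow> p \<in> U"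
    and z: "norm (z - c) < \<rho>1"
  shows "contour_integral (circlepath c \<rho>2) (\<lambda>p. f p / (p - z)) =
         contour_integral (circlepath c \<rho>1) (\<lambda>p. f p / (p - z))"
proof -
  have "homotopic_loops (U - {z}) (circlepath c \<rho>1) (circlepath c \<rho>2)"
    by (rule homotopic_loops_circlepath_radii) (use assms in auto)
  moreover have "(\<lambda>p. f p / (p - z)) holomorphic_on (U - {z})"
    using assms by (auto intro!: holomorphic_intros elim: holomorphic_on_subset)
  ultimately show ?thesis
    using Cauchy_theorem_homotopic_loops[of "U - {z}"] assms(1) by (metis open_delete valid_path_circlepath)
qed

lemma contour_integral_circlepath_enlarge_across:
  assumes U: "open U" "f holomorphic_on U" and \<rho>: "0 < \<rho>1" "\<rho>1 \<le> \<rho>2"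
    and annulus: "\<And>p. \<rho>1 \<le> norm (p - c) \<Longrightarrow> norm (p - c) \<le> \<rho>2 \<Longrightarrow> p \<in> U"
    and z: "\<rho>1 < norm (z - c)" "norm (z - c) < \<rho>2"
  shows "contour_integral (circlepath c \<rho>2) (\<lambda>p. f p / (p - z)) =
         contour_integral (circlepath c \<rho>1) (\<lambda>p. f p / (p - z)) + 2 * pi * \<i> * f z"
proof -
  define h where "h = (\<lambda>p. if p = z then deriv f z else (f p - f z) / (p - z))"
  have h: "h holomorphic_on U" unfolding h_def by (rule pole_lemma_open) (use U in auto)
  have path_U: "path_image (circlepath c \<rho>) \<subseteq> U" if "\<rho> \<in> {\<rho>1, \<rho>2}" for \<rho>
    using that \<rho> by (auto intro!: annulus simp: dist_norm norm_minus_commute)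
  have split: "contour_integral (circlepath c \<rho>) (\<lambda>p. f p / (p - z)) =
      contour_integral (circlepath c \<rho>) h + 2 * pi * \<i> * winding_number (circlepath c \<rho>) z * f z"
    if "\<rho> \<in> {\<rho>1, \<rho>2}" for \<rho>
  proof (rule contour_integral_unique)
    have z_off: "z \<notin> path_image (circlepath c \<rho>)"
      using that \<rho> z by (auto simp: dist_norm norm_minus_commute)
    have "(h has_contour_integral contour_integral (circlepath c \<rho>) h) (circlepath c \<rho>)"
      using contour_integrable_holomorphic_simple[OF h U(1) valid_path_circlepath path_U[OF that]]
      by (rule has_contour_integral_integral)
    then have "((\<lambda>p. h p + f z * (1 / (p - z))) has_contour_integral contour_integral (circlepath c \<rho>) h
        + f z * (2 * pi * \<i> * winding_number (circlepath c \<rho>) z)) (circlepath c \<rho>)"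
      by (intro has_contour_integral_add has_contour_integral_lmul
          has_contour_integral_winding_number valid_path_circlepath z_off)
    then have "((\<lambda>p. f p / (p - z)) has_contour_integral contour_integral (circlepath c \<rho>) h
        + f z * (2 * pi * \<i> * winding_number (circlepath c \<rho>) z)) (circlepath c \<rho>)"
      by (rule has_contour_integral_eq) (use z_off in \<open>auto simp: h_def simp flip: add_divide_distrib\<close>)
    then show "((\<lambda>p. f p / (p - z)) has_contour_integral contour_integral (circlepath c \<rho>) h
        + 2 * pi * \<i> * winding_number (circlepath c \<rho>) z * f z) (circlepath c \<rho>)"
      by (simp add: ac_simps)
  qed
  have "winding_number (circlepath c \<rho>2) z = 1"
    using z by (intro winding_number_circlepath) (simp add: norm_minus_commute)
  moreover have "winding_number (circlepath c \<rho>1) z = 0"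
    by (rule winding_number_zero_outside[of _ "cball c \<rho>1"])
      (use z \<rho> in \<open>auto simp: dist_norm norm_minus_commute\<close>)
  moreover have "contour_integral (circlepath c \<rho>1) h = contour_integral (circlepath c \<rho>2) h"
    by (rule Cauchy_theorem_homotopic_loops[OF homotopic_loops_circlepath_radii U(1) h])
      (use \<rho> annulus in auto)
  ultimately show ?thesis using split[of \<rho>1] split[of \<rho>2] by simp
qed

lemma dist_gt_of_disjoint_cballs:
  fixes a b :: "'a::real_normed_vector"
  assumes "cball a \<rho> \<inter> cball b \<sigma> = {}" "0 \<le> \<rho>" "0 \<le> \<sigma>"
  shows "\<rho> + \<sigma> < dist a b"
proof (rule ccontr)
  assume "\<not> ?thesis"
  then have close: "dist a b \<le> \<rho> + \<sigma>" by simp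
  show False
  proof (cases "dist a b \<le> \<rho>")
    case True
    then show False using assms by (auto simp: disjoint_iff)
  next
    case False
    define p where "p = a + (\<rho> / dist a b) *\<^sub>R (b - a)"
    have "a \<noteq> b" using False assms(2) by auto
    have "dist a p = \<rho> / dist a b * dist a b"
      using False assms(2) by (simp add: p_def dist_norm norm_minus_commute)
    then have ap: "dist a p = \<rho>" using False \<open>a \<noteq> b\<close> by simp
    have "b - p = (1 - \<rho> / dist a b) *\<^sub>R (b - a)" by (simp add: p_def algebra_simps)
    moreover have "0 \<le> 1 - \<rho> / dist a b" using False by (auto simp: divide_le_eq)
    ultimately have "dist p b = (1 - \<rho> / dist a b) * dist a b"
      by (simp add: dist_norm norm_minus_commute)
    then have "dist p b = dist a b - \<rho>" using \<open>a \<noteq> b\<close> by (simp add: algebra_simps)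
    then have "p \<in> cball a \<rho> \<inter> cball b \<sigma>" using ap close by (simp add: dist_commute)
    with assms(1) show False by blast
  qed
qed

lemma exists_sphere_point_at_radial_distance:
  fixes c p :: "'a::real_normed_vector"
  assumes "0 < \<rho>" "p \<noteq> c"
  shows "\<exists>x\<in>sphere c \<rho>. dist x p = \<bar>dist c p - \<rho>\<bar>"
proof
  define x where "x = c + (\<rho> / dist c p) *\<^sub>R (p - c)"
  have d: "dist c p > 0" using assms by simp
  show "x \<in> sphere c \<rho>" using d assms by (simp add: x_def dist_norm norm_minus_commute)
  have "p - x = (1 - \<rho> / dist c p) *\<^sub>R (p - c)" by (simp add: x_def algebra_simps)
  then have "dist x p = \<bar>1 - \<rho> / dist c p\<bar> * dist c p"
    by (simp add: dist_norm norm_minus_commute)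
  also have "\<dots> = \<bar>dist c p - \<rho>\<bar>" using d by (simp add: abs_mult_pos' algebra_simps flip: abs_mult)
  finally show "dist x p = \<bar>dist c p - \<rho>\<bar>" .
qed

lemma islimpt_Compl_cball:
  fixes z :: "'a::{real_normed_vector, perfect_space}"
  assumes "dist c z = \<rho>"
  shows "z islimpt - cball c \<rho>"
proof -
  have "z \<in> frontier (- cball c \<rho>)" using assms by simp
  then show ?thesis using assms by (auto simp: frontier_def closure_def)
qed

section \<open>Disjoint disks\<close>

lemma inH_add: "inH m c r f \<Longrightarrow> inH m c r g \<Longrightarrow> inH m c r (\<lambda>z. f z + g z)"
  unfolding inH_def
  by (elim exE conjE, rule_tac x="U \<inter> Ua" in exI) (auto intro!: holomorphic_intros elim: holomorphic_on_subset)

lemma inH_diff: "inH m c r f \<Longrightarrow> inH m c r g \<Longrightarrow> inH m c r (\<lambda>z. f z - g z)"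
  unfolding inH_def
  by (elim exE conjE, rule_tac x="U \<inter> Ua" in exI) (auto intro!: holomorphic_intros elim: holomorphic_on_subset)

lemma inH_mult: "inH m c r f \<Longrightarrow> inH m c r g \<Longrightarrow> inH m c r (\<lambda>z. f z * g z)"
  unfolding inH_def
  by (elim exE conjE, rule_tac x="U \<inter> Ua" in exI) (auto intro!: holomorphic_intros elim: holomorphic_on_subset)

locale disk_system =
  fixes m :: nat and c :: "nat \<Rightarrow> complex" and r :: "nat \<Rightarrow> real"
  assumes radius_pos: "\<forall>j\<in>{1..m}. r j > 0"
    and disks_disjoint:
      "\<forall>i\<in>{1..m}. \<forall>j\<in>{1..m}. i \<noteq> j \<longrightarrow> cball (c i) (r i) \<inter> cball (c j) (r j) = {}"
begin

lemma centres_far_apart: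
  assumes "s \<in> {1..m}" "t \<in> {1..m}" "s \<noteq> t"
  shows "r s + r t < dist (c s) (c t)"
  using assms disks_disjoint radius_pos by (intro dist_gt_of_disjoint_cballs) (auto simp: less_imp_le)

lemma compact_Gam: "compact (Gam m c r)"
  unfolding Gam_def by (intro compact_UN) auto

lemma open_Dint: "open (Dint m c r)"
  unfolding Dint_def by auto

lemma open_Dext: "open (Dext m c r)"
  unfolding Dext_def by (intro open_Compl closed_UN) auto

lemma Gam_subset_cballs: "Gam m c r \<subseteq> (\<Union>j\<in>{1..m}. cball (c j) (r j))"
  unfolding Gam_def by auto

lemma Gam_disjoint_Dint: "z \<in> Gam m c r \<Longrightarrow> z \<notin> Dint m c r"
proof
  assume "z \<in> Gam m c r" "z \<in> Dint m c r"
  then obtain s t where "s \<in> {1..m}" "t \<in> {1..m}" "dist (c t) z = r t" "dist (c s) z < r s"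
    unfolding Gam_def Dint_def by auto
  moreover from this have "z \<in> cball (c s) (r s) \<inter> cball (c t) (r t)" by simp
  ultimately show False using disks_disjoint by (cases "s = t") auto
qed

lemma Dext_disjoint_Dint: "z \<in> Dext m c r \<Longrightarrow> z \<notin> Dint m c r"
  unfolding Dext_def Dint_def by auto

lemma Dext_disjoint_Gam: "z \<in> Dext m c r \<Longrightarrow> z \<notin> Gam m c r"
  using Gam_subset_cballs unfolding Dext_def by blast

lemma Dint_Gam_Dext_cover: "Dint m c r \<union> Gam m c r \<union> Dext m c r = UNIV"
  unfolding Dext_def Dint_def Gam_def by (auto simp: le_less)

lemma eventually_at_infinity_in_Dext: "\<forall>\<^sub>F z in at_infinity. z \<in> Dext m c r"
proof -
  have "bounded (\<Union>j\<in>{1..m}. cball (c j) (r j))" by (intro bounded_UN) auto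
  then obtain b where b: "\<forall>x\<in>\<Union>j\<in>{1..m}. cball (c j) (r j). norm x \<le> b"
    unfolding bounded_pos by blast
  have "z \<notin> cball (c j) (r j)" if "j \<in> {1..m}" "b + 1 \<le> norm z" for j z
  proof
    assume "z \<in> cball (c j) (r j)"
    then have "norm z \<le> b" using b that(1) by blast
    with that(2) show False by simp
  qed
  then show ?thesis unfolding eventually_at_infinity Dext_def by (intro exI[of _ "b + 1"]) blast
qed

lemma CI_holomorphic:
  assumes "continuous_on (Gam m c r) f"
  shows "CI m c r f holomorphic_on (- Gam m c r)"
proof -
  have "(\<lambda>z. contour_integral (circlepath (c t) (r t)) (\<lambda>p. f p / (p - z))) holomorphic_on (- Gam m c r)"
    if t: "t \<in> {1..m}" for t
  proof (rule holomorphic_on_subset[OF holomorphic_on_cauchy_integral_circlepath])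
    show "continuous_on (sphere (c t) (r t)) f"
      by (rule continuous_on_subset[OF assms]) (use t in \<open>auto simp: Gam_def\<close>)
  qed (use radius_pos t in \<open>auto simp: Gam_def\<close>)
  then show ?thesis
    unfolding CI_def[abs_def] by (intro holomorphic_intros holomorphic_on_sum) auto
qed

lemma CI_tendsto_0:
  assumes "continuous_on (Gam m c r) f"
  shows "(CI m c r f \<longlongrightarrow> 0) at_infinity"
proof -
  have "((\<lambda>z. contour_integral (circlepath (c t) (r t)) (\<lambda>p. f p / (p - z))) \<longlongrightarrow> 0) at_infinity"
    if t: "t \<in> {1..m}" for t
  proof (rule cauchy_integral_circlepath_tendsto_0)
    show "continuous_on (sphere (c t) (r t)) f"
      by (rule continuous_on_subset[OF assms]) (use t in \<open>auto simp: Gam_def\<close>)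
  qed (use radius_pos t in auto)
  then have "((\<lambda>z. \<Sum>t\<in>{1..m}. contour_integral (circlepath (c t) (r t)) (\<lambda>p. f p / (p - z)))
      \<longlongrightarrow> 0) at_infinity"
    by (rule tendsto_null_sum)
  then show ?thesis unfolding CI_def[abs_def] by (intro tendsto_mult_right_zero)
qed

lemma CI_cong:
  assumes "\<forall>z\<in>Gam m c r. f z = g z"
  shows "CI m c r f = CI m c r g"
proof
  fix z
  have "contour_integral (circlepath (c t) (r t)) (\<lambda>p. f p / (p - z)) =
        contour_integral (circlepath (c t) (r t)) (\<lambda>p. g p / (p - z))" if t: "t \<in> {1..m}" for t
  proof (rule contour_integral_eq)
    fix p assume "p \<in> path_image (circlepath (c t) (r t))"
    moreover have "r t > 0" using t radius_pos by blast
    ultimately have "p \<in> sphere (c t) (r t)" by simp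
    then have "p \<in> Gam m c r" using t unfolding Gam_def by blast
    then show "f p / (p - z) = g p / (p - z)" using assms by simp
  qed
  then show "CI m c r f z = CI m c r g z" unfolding CI_def by simp
qed

lemma proj_minus_tendsto_0:
  assumes "continuous_on (Gam m c r) f"
  shows "(proj_minus m c r f \<longlongrightarrow> 0) at_infinity"
proof -
  have "\<forall>\<^sub>F z in at_infinity. - CI m c r f z = proj_minus m c r f z"
    using eventually_at_infinity_in_Dext by eventually_elim (simp add: proj_minus_def)
  moreover have "((\<lambda>z. - CI m c r f z) \<longlongrightarrow> 0) at_infinity"
    using tendsto_minus[OF CI_tendsto_0[OF assms]] by simp
  ultimately show ?thesis using Lim_transform_eventually by blast
qed

end

locale disk_collar = disk_system +
  fixes f :: "complex \<Rightarrow> complex" and U :: "complex set" and \<epsilon> :: real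
  assumes open_U: "open U" and holo_f: "f holomorphic_on U" and eps_pos: "\<epsilon> > 0"
    and collar_in_U: "\<And>s p. s \<in> {1..m} \<Longrightarrow> \<bar>dist (c s) p - r s\<bar> \<le> \<epsilon> \<Longrightarrow> p \<in> U"
    and collars_apart:
      "\<And>s t. s \<in> {1..m} \<Longrightarrow> t \<in> {1..m} \<Longrightarrow> s \<noteq> t \<Longrightarrow> r s + r t + 2 * \<epsilon> < dist (c s) (c t)"
begin

lemma far_from_other_disks:
  assumes "s \<in> {1..m}" "t \<in> {1..m}" "t \<noteq> s" "dist (c s) z < r s + \<epsilon>"
  shows "r t + \<epsilon> < dist (c t) z"
  using collars_apart[of s t] assms dist_triangle[of "c s" "c t" z] by (simp add: dist_commute)

lemma near_disk_regions:
  assumes s: "s \<in> {1..m}" and z: "dist (c s) z < r s + \<epsilon>"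
  shows "z \<in> Dint m c r \<longleftrightarrow> dist (c s) z < r s"
    and "z \<in> Gam m c r \<longleftrightarrow> dist (c s) z = r s"
    and "z \<in> Dext m c r \<longleftrightarrow> r s < dist (c s) z"
proof -
  have other: "r j < dist (c j) z" if "j \<in> {1..m}" "j \<noteq> s" for j
    using far_from_other_disks[OF s that z] eps_pos by simp
  show "z \<in> Dint m c r \<longleftrightarrow> dist (c s) z < r s"
  proof
    assume "z \<in> Dint m c r"
    then obtain j where "j \<in> {1..m}" "dist (c j) z < r j" unfolding Dint_def by auto
    then show "dist (c s) z < r s" using other[of j] by (cases "j = s") auto
  qed (use s in \<open>auto simp: Dint_def\<close>)
  show "z \<in> Gam m c r \<longleftrightarrow> dist (c s) z = r s"
  proof
    assume "z \<in> Gam m c r"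
    then obtain j where "j \<in> {1..m}" "dist (c j) z = r j" unfolding Gam_def by auto
    then show "dist (c s) z = r s" using other[of j] by (cases "j = s") auto
  qed (use s in \<open>auto simp: Gam_def\<close>)
  show "z \<in> Dext m c r \<longleftrightarrow> r s < dist (c s) z"
  proof
    assume "r s < dist (c s) z"
    then have "dist (c j) z > r j" if "j \<in> {1..m}" for j using other that by (cases "j = s") auto
    then show "z \<in> Dext m c r" unfolding Dext_def by (auto simp: not_le)
  next
    assume "z \<in> Dext m c r"
    then have "z \<notin> cball (c s) (r s)" using s unfolding Dext_def by blast
    then show "r s < dist (c s) z" by simp
  qed
qed

lemma continuous_on_collar:
  "s \<in> {1..m} \<Longrightarrow> continuous_on {p. \<bar>dist (c s) p - r s\<bar> \<le> \<epsilon>} f"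
  by (intro continuous_on_subset[OF holomorphic_on_imp_continuous_on[OF holo_f]])
    (auto intro: collar_in_U)

lemma annulus_in_U:
  "s \<in> {1..m} \<Longrightarrow> r s \<le> norm (p - c s) \<Longrightarrow> norm (p - c s) \<le> r s + \<epsilon> \<Longrightarrow> p \<in> U"
  using collar_in_U[of s p] by (simp add: dist_norm norm_minus_commute)

text \<open>The Cauchy integral with the \<open>s\<close>-th circle moved out to radius \<open>r s + \<epsilon>\<close>: it continues
  \<open>proj_plus m c r f\<close> holomorphically across that circle.\<close>
definition CI_enlarged :: "nat \<Rightarrow> complex \<Rightarrow> complex" where
  "CI_enlarged s z = (1 / (2 * pi * \<i>)) *
     (contour_integral (circlepath (c s) (r s + \<epsilon>)) (\<lambda>p. f p / (p - z)) +
      (\<Sum>t\<in>{1..m} - {s}. contour_integral (circlepath (c t) (r t)) (\<lambda>p. f p / (p - z))))"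

lemma CI_enlarged_holomorphic:
  assumes s: "s \<in> {1..m}"
  shows "CI_enlarged s holomorphic_on ball (c s) (r s + \<epsilon>)"
proof -
  have "r s > 0" using s radius_pos by blast
  have "(\<lambda>z. contour_integral (circlepath (c s) (r s + \<epsilon>)) (\<lambda>p. f p / (p - z)))
      holomorphic_on ball (c s) (r s + \<epsilon>)"
  proof (rule holomorphic_on_subset[OF holomorphic_on_cauchy_integral_circlepath])
    show "continuous_on (sphere (c s) (r s + \<epsilon>)) f"
      using eps_pos by (intro continuous_on_subset[OF continuous_on_collar[OF s]]) auto
  qed (use \<open>r s > 0\<close> eps_pos in auto)
  moreover have "(\<lambda>z. contour_integral (circlepath (c t) (r t)) (\<lambda>p. f p / (p - z)))
      holomorphic_on ball (c s) (r s + \<epsilon>)" if t: "t \<in> {1..m} - {s}" for t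
  proof (rule holomorphic_on_subset[OF holomorphic_on_cauchy_integral_circlepath])
    show "continuous_on (sphere (c t) (r t)) f"
      using t eps_pos by (intro continuous_on_subset[OF continuous_on_collar[of t]]) auto
    show "ball (c s) (r s + \<epsilon>) \<subseteq> - sphere (c t) (r t)"
    proof
      fix x assume "x \<in> ball (c s) (r s + \<epsilon>)"
      then have "r t + \<epsilon> < dist (c t) x" using far_from_other_disks[OF s, of t] t by auto
      then show "x \<in> - sphere (c t) (r t)" using eps_pos by auto
    qed
  qed (use t radius_pos in blast)
  ultimately show ?thesis
    unfolding CI_enlarged_def[abs_def] by (intro holomorphic_intros) auto
qed

lemma CI_split_at:
  "s \<in> {1..m} \<Longrightarrow> CI m c r f z = (1 / (2 * pi * \<i>)) *
     (contour_integral (circlepath (c s) (r s)) (\<lambda>p. f p / (p - z)) +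
      (\<Sum>t\<in>{1..m} - {s}. contour_integral (circlepath (c t) (r t)) (\<lambda>p. f p / (p - z))))"
  unfolding CI_def by (simp add: sum.remove)

lemma CI_eq_CI_enlarged_inside:
  assumes s: "s \<in> {1..m}" and z: "dist (c s) z < r s"
  shows "CI m c r f z = CI_enlarged s z"
proof -
  have "contour_integral (circlepath (c s) (r s + \<epsilon>)) (\<lambda>p. f p / (p - z)) =
        contour_integral (circlepath (c s) (r s)) (\<lambda>p. f p / (p - z))"
    using radius_pos s eps_pos z annulus_in_U[OF s]
    by (intro contour_integral_circlepath_enlarge_inside[OF open_U holo_f])
      (auto simp: dist_norm norm_minus_commute)
  then show ?thesis unfolding CI_split_at[OF s] CI_enlarged_def by simp
qed

lemma CI_eq_CI_enlarged_outside:
  assumes s: "s \<in> {1..m}" and z: "r s < dist (c s) z" "dist (c s) z < r s + \<epsilon>"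
  shows "f z + CI m c r f z = CI_enlarged s z"
proof -
  have enlarge: "contour_integral (circlepath (c s) (r s + \<epsilon>)) (\<lambda>p. f p / (p - z)) =
        contour_integral (circlepath (c s) (r s)) (\<lambda>p. f p / (p - z)) + 2 * pi * \<i> * f z"
    using radius_pos s eps_pos z annulus_in_U[OF s]
    by (intro contour_integral_circlepath_enlarge_across[OF open_U holo_f])
      (auto simp: dist_norm norm_minus_commute)
  have residue: "1 / (2 * pi * \<i>) * (2 * pi * \<i> * f z) = f z" by simp
  show ?thesis
    unfolding CI_split_at[OF s] CI_enlarged_def enlarge distrib_left residue by (simp only: add_ac)
qed

lemma proj_plus_eq_CI_enlarged:
  assumes s: "s \<in> {1..m}" and z: "dist (c s) z < r s + \<epsilon>"
  shows "proj_plus m c r f z = CI_enlarged s z"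
proof -
  consider "dist (c s) z < r s" | "r s < dist (c s) z" | "dist (c s) z = r s" by linarith
  then show ?thesis
  proof cases
    case 1
    then show ?thesis
      using near_disk_regions(1)[OF s z] CI_eq_CI_enlarged_inside[OF s] by (simp add: proj_plus_def)
  next
    case 2
    then show ?thesis using near_disk_regions(1,2)[OF s z] CI_eq_CI_enlarged_outside[OF s 2 z]
      by (simp add: proj_plus_def)
  next
    case 3
    have within: "at z within Dint m c r = at z within ball (c s) (r s)"
      by (rule at_within_nhd[of _ "ball (c s) (r s + \<epsilon>)"]) (use z near_disk_regions(1)[OF s] in auto)
    have "isCont (CI_enlarged s) z"
      using CI_enlarged_holomorphic[OF s] z
      by (meson continuous_on_eq_continuous_at holomorphic_on_imp_continuous_on mem_ball open_ball)
    then have "(CI_enlarged s \<longlongrightarrow> CI_enlarged s z) (at z within ball (c s) (r s))"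
      unfolding isCont_def by (rule tendsto_within_subset) simp
    moreover have "\<forall>\<^sub>F x in at z within ball (c s) (r s). CI_enlarged s x = CI m c r f x"
      unfolding eventually_at_filter by (intro always_eventually) (simp add: CI_eq_CI_enlarged_inside[OF s])
    ultimately have "(CI m c r f \<longlongrightarrow> CI_enlarged s z) (at z within Dint m c r)"
      unfolding within by (simp add: tendsto_cong)
    moreover have "at z within Dint m c r \<noteq> bot"
      unfolding within using 3 s radius_pos by (simp add: trivial_limit_within islimpt_ball)
    ultimately show ?thesis
      using near_disk_regions(1,2)[OF s z] 3 by (simp add: proj_plus_def tendsto_Lim)
  qed
qed

lemma proj_plus_holomorphic:
  "proj_plus m c r f holomorphic_on (\<Union>s\<in>{1..m}. ball (c s) (r s + \<epsilon>))"
proof (rule holomorphic_on_UN_open)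
  fix s assume s: "s \<in> {1..m}"
  show "proj_plus m c r f holomorphic_on ball (c s) (r s + \<epsilon>)"
    by (rule holomorphic_transform[OF CI_enlarged_holomorphic[OF s]])
      (simp add: proj_plus_eq_CI_enlarged[OF s])
qed simp

definition collar :: "complex set" where
  "collar = (\<Union>s\<in>{1..m}. ball (c s) (r s + \<epsilon>) - cball (c s) (r s - \<epsilon>))"

lemma open_collar: "open collar"
  unfolding collar_def by (intro open_UN ballI open_Diff) auto

lemma Gam_subset_collar: "Gam m c r \<subseteq> collar"
  unfolding collar_def Gam_def using eps_pos by auto

lemma collar_subset_U: "collar \<subseteq> U"
  unfolding collar_def by (auto intro: collar_in_U)

lemma collar_subset_balls: "collar \<subseteq> (\<Union>s\<in>{1..m}. ball (c s) (r s + \<epsilon>))"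
  unfolding collar_def by auto

lemma continuous_on_Gam: "continuous_on (Gam m c r) f"
  using Gam_subset_collar collar_subset_U holo_f
  by (meson holomorphic_on_imp_continuous_on holomorphic_on_subset order.trans)

lemma proj_minus_eq_diff:
  assumes "z \<in> collar"
  shows "proj_minus m c r f z = f z - proj_plus m c r f z"
proof -
  obtain s where s: "s \<in> {1..m}" and z: "dist (c s) z < r s + \<epsilon>" "r s - \<epsilon> < dist (c s) z"
    using assms unfolding collar_def by auto
  consider "dist (c s) z \<noteq> r s" | "dist (c s) z = r s" by blast
  then show ?thesis
  proof cases
    case 1
    then show ?thesis
      using near_disk_regions[OF s z(1)] by (auto simp: proj_plus_def proj_minus_def)
  next
    case 2
    have within: "at z within Dext m c r = at z within - cball (c s) (r s)"
      by (rule at_within_nhd[of _ "ball (c s) (r s + \<epsilon>)"]) (use z near_disk_regions(3)[OF s] in auto)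
    have "isCont f z"
      using holo_f open_U collar_subset_U assms
      by (meson continuous_on_eq_continuous_at holomorphic_on_imp_continuous_on subsetD)
    moreover have "isCont (proj_plus m c r f) z"
      using proj_plus_holomorphic collar_subset_balls assms
      by (meson continuous_on_eq_continuous_at holomorphic_on_imp_continuous_on open_UN open_ball subsetD)
    ultimately have "((\<lambda>w. f w - proj_plus m c r f w) \<longlongrightarrow> f z - proj_plus m c r f z) (at z within Dext m c r)"
      unfolding isCont_def by (intro tendsto_within_subset[OF tendsto_diff]) auto
    moreover have "\<forall>\<^sub>F w in at z within Dext m c r. f w - proj_plus m c r f w = - CI m c r f w"
      unfolding eventually_at_filter
      by (intro always_eventually) (auto simp: proj_plus_def dest: Dext_disjoint_Dint Dext_disjoint_Gam)
    ultimately have "((\<lambda>w. - CI m c r f w) \<longlongrightarrow> f z - proj_plus m c r f z) (at z within Dext m c r)"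
      by (simp add: tendsto_cong)
    moreover have "at z within Dext m c r \<noteq> bot"
      unfolding within using 2 by (simp add: trivial_limit_within islimpt_Compl_cball)
    ultimately show ?thesis
      using near_disk_regions(2,3)[OF s z(1)] 2 by (simp add: proj_minus_def tendsto_Lim)
  qed
qed

lemma proj_minus_holomorphic: "proj_minus m c r f holomorphic_on (Dext m c r \<union> collar)"
proof (rule holomorphic_on_Un)
  have "CI m c r f holomorphic_on Dext m c r"
    by (rule holomorphic_on_subset[OF CI_holomorphic[OF continuous_on_Gam]])
      (use Dext_disjoint_Gam in blast)
  then have "(\<lambda>z. - CI m c r f z) holomorphic_on Dext m c r" by (intro holomorphic_intros)
  then show "proj_minus m c r f holomorphic_on Dext m c r"
    by (rule holomorphic_transform) (simp add: proj_minus_def)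
  have "(\<lambda>z. f z - proj_plus m c r f z) holomorphic_on collar"
    using holomorphic_on_subset[OF holo_f collar_subset_U]
      holomorphic_on_subset[OF proj_plus_holomorphic collar_subset_balls]
    by (intro holomorphic_intros)
  then show "proj_minus m c r f holomorphic_on collar"
    by (rule holomorphic_transform) (simp add: proj_minus_eq_diff)
qed (use open_Dext open_collar in auto)

end

section \<open>The splitting \<open>f = f\<^sub>+ + f\<^sub>-\<close>\<close>

context disk_system
begin

lemma exists_collar:
  assumes U: "open U" "Gam m c r \<subseteq> U" and f: "f holomorphic_on U"
  shows "\<exists>\<epsilon>. disk_collar m c r f U \<epsilon>"
proof -
  obtain e0 where e0: "e0 > 0" "(\<Union>x\<in>Gam m c r. cball x e0) \<subseteq> U"
    using compact_subset_open_imp_cball_epsilon_subset[OF compact_Gam U] by blast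
  have small: "\<forall>\<^sub>F \<epsilon> in at_right 0. \<epsilon> < \<delta>" if "\<delta> > 0" for \<delta> :: real
    using eventually_at_right_real[OF that] by eventually_elim simp
  have "\<forall>\<^sub>F \<epsilon> in at_right 0. 0 < \<epsilon> \<and> \<epsilon> < e0 \<and> (\<forall>s\<in>{1..m}. \<epsilon> < r s) \<and>
      (\<forall>s\<in>{1..m}. \<forall>t\<in>{1..m} - {s}. \<epsilon> < (dist (c s) (c t) - r s - r t) / 2)"
  proof -
    have "0 < (dist (c s) (c t) - r s - r t) / 2" if "s \<in> {1..m}" "t \<in> {1..m} - {s}" for s t
      using centres_far_apart[of s t] that by auto
    then show ?thesis using e0(1) radius_pos
      by (intro eventually_conj eventually_ball_finite ballI small eventually_at_right_less) auto
  qed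
  from eventually_happens'[OF _ this] obtain \<epsilon> where \<epsilon>: "0 < \<epsilon>" "\<epsilon> < e0" "\<forall>s\<in>{1..m}. \<epsilon> < r s"
      "\<forall>s\<in>{1..m}. \<forall>t\<in>{1..m} - {s}. \<epsilon> < (dist (c s) (c t) - r s - r t) / 2"
    by auto
  have "p \<in> U" if s: "s \<in> {1..m}" and p: "\<bar>dist (c s) p - r s\<bar> \<le> \<epsilon>" for s p
  proof -
    have "\<epsilon> < r s" using \<epsilon>(3) s by blast
    then have "r s > 0" "p \<noteq> c s" using \<epsilon>(1) p by auto
    then obtain x where x: "x \<in> sphere (c s) (r s)" "dist x p = \<bar>dist (c s) p - r s\<bar>"
      using exists_sphere_point_at_radial_distance by blast
    then have "x \<in> Gam m c r" "p \<in> cball x e0" using s p \<epsilon>(2) by (auto simp: Gam_def)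
    then show ?thesis using e0(2) by blast
  qed
  moreover have "r s + r t + 2 * \<epsilon> < dist (c s) (c t)"
    if "s \<in> {1..m}" "t \<in> {1..m}" "s \<noteq> t" for s t
  proof -
    have "\<epsilon> < (dist (c s) (c t) - r s - r t) / 2" using \<epsilon>(4) that by blast
    then show ?thesis by simp
  qed
  ultimately have "disk_collar m c r f U \<epsilon>"
    using U(1) f \<epsilon>(1) disk_system_axioms by (simp add: disk_collar_def disk_collar_axioms_def)
  then show ?thesis ..
qed

definition near_Gam :: "complex filter" where
  "near_Gam = (INF U\<in>{U. open U \<and> Gam m c r \<subseteq> U}. principal U)"

lemma eventually_near_Gam:
  "(\<forall>\<^sub>F z in near_Gam. P z) \<longleftrightarrow> (\<exists>U. open U \<and> Gam m c r \<subseteq> U \<and> (\<forall>z\<in>U. P z))"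
proof -
  have "(\<forall>\<^sub>F z in near_Gam. P z) \<longleftrightarrow>
      (\<exists>U\<in>{U. open U \<and> Gam m c r \<subseteq> U}. eventually P (principal U))"
    unfolding near_Gam_def
  proof (rule eventually_INF_base)
    fix A B assume "A \<in> {U. open U \<and> Gam m c r \<subseteq> U}" "B \<in> {U. open U \<and> Gam m c r \<subseteq> U}"
    then show "\<exists>C\<in>{U. open U \<and> Gam m c r \<subseteq> U}. principal C \<le> inf (principal A) (principal B)"
      by (intro bexI[of _ "A \<inter> B"]) auto
  qed auto
  then show ?thesis by (auto simp: eventually_principal)
qed

lemma germ_eq_iff_eventually: "germ_eq m c r f g \<longleftrightarrow> (\<forall>\<^sub>F z in near_Gam. f z = g z)"
  unfolding germ_eq_def eventually_near_Gam ..

lemma germ_eq_trans: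
  assumes "germ_eq m c r f g" "germ_eq m c r g h"
  shows "germ_eq m c r f h"
  using assms unfolding germ_eq_iff_eventually by eventually_elim simp

lemma germ_eq2_trans: "germ_eq2 m c r F G \<Longrightarrow> germ_eq2 m c r G K \<Longrightarrow> germ_eq2 m c r F K"
  unfolding germ_eq2_def by (auto intro: germ_eq_trans)

lemma inH_cong:
  assumes "inH m c r g" "\<forall>\<^sub>F z in near_Gam. f z = g z"
  shows "inH m c r f"
proof -
  obtain U V where U: "open U" "Gam m c r \<subseteq> U" "g holomorphic_on U"
    and V: "open V" "Gam m c r \<subseteq> V" "\<forall>z\<in>V. f z = g z"
    using assms unfolding inH_def eventually_near_Gam by blast
  have "g holomorphic_on U \<inter> V" using U(3) by (rule holomorphic_on_subset) blast
  then have "f holomorphic_on U \<inter> V" by (rule holomorphic_transform) (simp add: V(3))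
  then show ?thesis unfolding inH_def using U V by (intro exI[of _ "U \<inter> V"]) auto
qed

definition H_plus :: "(complex \<Rightarrow> complex) \<Rightarrow> bool" where
  "H_plus g \<longleftrightarrow> (\<exists>W. open W \<and> (\<Union>j\<in>{1..m}. cball (c j) (r j)) \<subseteq> W \<and> g holomorphic_on W)"

definition H_minus :: "(complex \<Rightarrow> complex) \<Rightarrow> bool" where
  "H_minus g \<longleftrightarrow>
     (\<exists>W. open W \<and> - Dint m c r \<subseteq> W \<and> g holomorphic_on W \<and> (g \<longlongrightarrow> 0) at_infinity)"

lemma H_plus_inH: "H_plus g \<Longrightarrow> inH m c r g"
  unfolding H_plus_def inH_def using Gam_subset_cballs by blast

lemma H_minus_inH: "H_minus g \<Longrightarrow> inH m c r g"
  unfolding H_minus_def inH_def using Gam_disjoint_Dint by blast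

lemma H_plus_add: "H_plus f \<Longrightarrow> H_plus g \<Longrightarrow> H_plus (\<lambda>z. f z + g z)"
  unfolding H_plus_def
  by (elim exE conjE, rule_tac x="W \<inter> Wa" in exI) (auto intro!: holomorphic_intros elim: holomorphic_on_subset)

lemma H_plus_mult: "H_plus f \<Longrightarrow> H_plus g \<Longrightarrow> H_plus (\<lambda>z. f z * g z)"
  unfolding H_plus_def
  by (elim exE conjE, rule_tac x="W \<inter> Wa" in exI) (auto intro!: holomorphic_intros elim: holomorphic_on_subset)

lemma H_plus_uminus: "H_plus f \<Longrightarrow> H_plus (\<lambda>z. - f z)"
  unfolding H_plus_def by (auto intro!: holomorphic_intros)

lemma H_plus_diff: "H_plus f \<Longrightarrow> H_plus g \<Longrightarrow> H_plus (\<lambda>z. f z - g z)"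
  using H_plus_add[OF _ H_plus_uminus, of f g] by simp

lemma H_minus_add: "H_minus f \<Longrightarrow> H_minus g \<Longrightarrow> H_minus (\<lambda>z. f z + g z)"
  unfolding H_minus_def
  by (elim exE conjE, rule_tac x="W \<inter> Wa" in exI)
    (auto intro!: holomorphic_intros tendsto_add_zero elim: holomorphic_on_subset)

lemma H_minus_mult: "H_minus f \<Longrightarrow> H_minus g \<Longrightarrow> H_minus (\<lambda>z. f z * g z)"
  unfolding H_minus_def
  by (elim exE conjE, rule_tac x="W \<inter> Wa" in exI)
    (auto intro!: holomorphic_intros tendsto_mult_zero elim: holomorphic_on_subset)

lemma H_minus_uminus: "H_minus f \<Longrightarrow> H_minus (\<lambda>z. - f z)"
  unfolding H_minus_def
  by (elim exE conjE, rule_tac x=W in exI) (auto intro!: holomorphic_intros dest: tendsto_minus)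

lemma H_minus_diff: "H_minus f \<Longrightarrow> H_minus g \<Longrightarrow> H_minus (\<lambda>z. f z - g z)"
  using H_minus_add[OF _ H_minus_uminus, of f g] by simp

lemma proj_split:
  assumes "inH m c r f"
  shows "H_plus (proj_plus m c r f)" and "H_minus (proj_minus m c r f)"
    and "\<forall>\<^sub>F z in near_Gam. proj_plus m c r f z + proj_minus m c r f z = f z"
proof -
  obtain U where U: "open U" "Gam m c r \<subseteq> U" "f holomorphic_on U"
    using assms unfolding inH_def by blast
  then obtain \<epsilon> where "disk_collar m c r f U \<epsilon>" using exists_collar by blast
  then interpret disk_collar m c r f U \<epsilon> .
  have "(\<Union>j\<in>{1..m}. cball (c j) (r j)) \<subseteq> (\<Union>s\<in>{1..m}. ball (c s) (r s + \<epsilon>))"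
    using eps_pos by (intro UN_mono) auto
  then show "H_plus (proj_plus m c r f)"
    unfolding H_plus_def using proj_plus_holomorphic by (intro exI[of _ "\<Union>s\<in>{1..m}. ball (c s) (r s + \<epsilon>)"]) auto
  have "- Dint m c r \<subseteq> Dext m c r \<union> collar"
    using Dint_Gam_Dext_cover Gam_subset_collar by blast
  then show "H_minus (proj_minus m c r f)"
    unfolding H_minus_def
    using proj_minus_holomorphic proj_minus_tendsto_0[OF continuous_on_Gam] open_Dext open_collar
    by (intro exI[of _ "Dext m c r \<union> collar"]) auto
  show "\<forall>\<^sub>F z in near_Gam. proj_plus m c r f z + proj_minus m c r f z = f z"
    unfolding eventually_near_Gam using open_collar Gam_subset_collar proj_minus_eq_diff
    by (intro exI[of _ collar]) auto
qed

lemma proj_plus_inH: "inH m c r f \<Longrightarrow> inH m c r (proj_plus m c r f)"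
  using proj_split(1) H_plus_inH by blast

lemma proj_minus_inH: "inH m c r f \<Longrightarrow> inH m c r (proj_minus m c r f)"
  using proj_split(2) H_minus_inH by blast

lemma H_plus_H_minus_eq_imp_zero:
  assumes g: "H_plus g" and h: "H_minus h" and eq: "\<forall>\<^sub>F z in near_Gam. g z = h z"
  shows "\<forall>\<^sub>F z in near_Gam. g z = 0 \<and> h z = 0"
proof -
  obtain W1 where W1: "open W1" "(\<Union>j\<in>{1..m}. cball (c j) (r j)) \<subseteq> W1" "g holomorphic_on W1"
    using g unfolding H_plus_def by blast
  obtain W2 where W2: "open W2" "- Dint m c r \<subseteq> W2" "h holomorphic_on W2" "(h \<longlongrightarrow> 0) at_infinity"
    using h unfolding H_minus_def by blast
  obtain V where V: "open V" "Gam m c r \<subseteq> V" "\<forall>z\<in>V. g z = h z"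
    using eq unfolding eventually_near_Gam by blast
  define V0 where "V0 = V \<inter> W1 \<inter> W2"
  have V0: "open V0" "Gam m c r \<subseteq> V0"
    using V W1 W2 Gam_subset_cballs Gam_disjoint_Dint unfolding V0_def by auto
  have "Dint m c r \<subseteq> (\<Union>j\<in>{1..m}. cball (c j) (r j))" unfolding Dint_def by fastforce
  with W1(2) have Dint_W1: "Dint m c r \<subseteq> W1" by blast
  have Dext_W2: "Dext m c r \<subseteq> W2" using W2(2) Dext_disjoint_Dint by blast
  \<comment> \<open>\<open>k\<close> glues \<open>g\<close> and \<open>h\<close> into an entire function vanishing at infinity.\<close>
  define k where "k z = (if z \<in> Dint m c r \<union> V0 then g z else h z)" for z
  have k_h: "k z = h z" if "z \<in> Dext m c r \<union> V0" for z
    using that V(3) Dext_disjoint_Dint unfolding k_def V0_def by auto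
  have "k holomorphic_on (Dint m c r \<union> V0) \<union> (Dext m c r \<union> V0)"
  proof (rule holomorphic_on_Un)
    have "g holomorphic_on Dint m c r \<union> V0"
      by (rule holomorphic_on_subset[OF W1(3)]) (use Dint_W1 in \<open>auto simp: V0_def\<close>)
    then show "k holomorphic_on Dint m c r \<union> V0"
      by (rule holomorphic_transform) (simp add: k_def)
    have "h holomorphic_on Dext m c r \<union> V0"
      by (rule holomorphic_on_subset[OF W2(3)]) (use Dext_W2 in \<open>auto simp: V0_def\<close>)
    then show "k holomorphic_on Dext m c r \<union> V0"
      by (rule holomorphic_transform) (simp add: k_h)
  qed (use open_Dint open_Dext V0 in auto)
  moreover have "(Dint m c r \<union> V0) \<union> (Dext m c r \<union> V0) = UNIV"
    using Dint_Gam_Dext_cover V0(2) by blast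
  ultimately have "k holomorphic_on UNIV" by simp
  moreover have "(k \<longlongrightarrow> 0) at_infinity"
    using W2(4) eventually_mono[OF eventually_at_infinity_in_Dext, of "\<lambda>z. h z = k z"] k_h
    by (simp add: tendsto_cong)
  ultimately have k0: "k z = 0" for z by (rule Liouville_weak_0)
  have "g z = 0 \<and> h z = 0" if "z \<in> V0" for z
    using k0[of z] V(3) that unfolding k_def V0_def by auto
  then show ?thesis unfolding eventually_near_Gam using V0 by blast
qed

lemma proj_unique:
  assumes g: "H_plus g" and h: "H_minus h" and eq: "\<forall>\<^sub>F z in near_Gam. f z = g z + h z"
  shows "\<forall>\<^sub>F z in near_Gam. proj_plus m c r f z = g z \<and> proj_minus m c r f z = h z"
proof -
  have f: "inH m c r f"
    using inH_add[OF H_plus_inH[OF g] H_minus_inH[OF h]] eq by (rule inH_cong)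
  have "\<forall>\<^sub>F z in near_Gam. proj_plus m c r f z - g z = h z - proj_minus m c r f z"
    using proj_split(3)[OF f] eq by eventually_elim (simp add: algebra_simps)
  from H_plus_H_minus_eq_imp_zero[OF H_plus_diff[OF proj_split(1)[OF f] g]
      H_minus_diff[OF h proj_split(2)[OF f]] this]
  show ?thesis by eventually_elim simp
qed

lemma proj_add:
  assumes "inH m c r f" "inH m c r g"
  shows "\<forall>\<^sub>F z in near_Gam.
    proj_plus m c r (\<lambda>z. f z + g z) z = proj_plus m c r f z + proj_plus m c r g z \<and>
    proj_minus m c r (\<lambda>z. f z + g z) z = proj_minus m c r f z + proj_minus m c r g z"
proof -
  have "\<forall>\<^sub>F z in near_Gam. f z + g z =
      (proj_plus m c r f z + proj_plus m c r g z) + (proj_minus m c r f z + proj_minus m c r g z)"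
    using proj_split(3)[OF assms(1)] proj_split(3)[OF assms(2)] by eventually_elim (simp add: algebra_simps)
  then show ?thesis by (intro proj_unique H_plus_add H_minus_add proj_split assms)
qed

lemma proj_cong:
  assumes "\<forall>\<^sub>F z in near_Gam. f z = g z"
  shows "\<forall>\<^sub>F z in near_Gam.
    proj_plus m c r f z = proj_plus m c r g z \<and> proj_minus m c r f z = proj_minus m c r g z"
proof -
  obtain U where U: "open U" "Gam m c r \<subseteq> U" "\<forall>z\<in>U. f z = g z"
    using assms unfolding eventually_near_Gam by blast
  have "CI m c r f = CI m c r g" using U(2,3) by (intro CI_cong) blast
  then show ?thesis unfolding eventually_near_Gam using U
    by (intro exI[of _ U]) (simp add: proj_plus_def proj_minus_def)
qed

end

section \<open>Compatibility of \<open>C\<close> with the product\<close>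

text \<open>\<open>pu, qu\<close> stand for the plus and minus parts of \<open>u a'\<close>, likewise for \<open>uh ah'\<close>, \<open>w a'\<close>,
  \<open>wh ah'\<close>, and \<open>sp, sm\<close> for those of \<open>u + uh\<close>.\<close>

lemma prodH_ring_identities:
  fixes A Ah u uh w wh pu qu puh quh pw qw pwh qwh sp sm :: "'a::comm_ring"
  assumes "pu + qu = u * A" "puh + quh = uh * Ah" "pw + qw = w * A" "pwh + qwh = wh * Ah"
    and "sp + sm = u + uh"
  defines "x \<equiv> A * sm - (qu + quh)" and "xh \<equiv> - Ah * sp + (pu + puh)"
    and "v \<equiv> w * pu - u * qw - w * quh - u * qwh"
    and "vh \<equiv> wh * puh - uh * qwh + uh * pw + wh * pu"
  shows "w * x + wh * xh - (v + vh) = sm * (qw + qwh) - sp * (pw + pwh)"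
    and "v * A + vh * Ah = (pu + puh) * (pw + pwh) - (qu + quh) * (qw + qwh)"
proof -
  have q: "qu = u * A - pu" "quh = uh * Ah - puh" "qw = w * A - pw" "qwh = wh * Ah - pwh"
      "sm = u + uh - sp"
    using assms(1-5) by (simp_all add: algebra_simps)
  show "w * x + wh * xh - (v + vh) = sm * (qw + qwh) - sp * (pw + pwh)"
    unfolding x_def xh_def v_def vh_def q by (simp add: algebra_simps)
  show "v * A + vh * Ah = (pu + puh) * (pw + pwh) - (qu + quh) * (qw + qwh)"
    unfolding v_def vh_def q by (simp add: algebra_simps)
qed

context disk_system
begin

lemma inM_deriv_inH:
  assumes "inM m n d c r a ah"
  shows "inH m c r (deriv a)" and "inH m c r (deriv ah)"
proof -
  have "\<exists>U. open U \<and> - Dint m c r \<subseteq> U \<and> a holomorphic_on U"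
    using assms unfolding inM_def by (elim conjE)
  then obtain U where U: "open U" "- Dint m c r \<subseteq> U" "a holomorphic_on U" by blast
  have "Gam m c r \<subseteq> U" using U(2) Gam_disjoint_Dint by blast
  with U show "inH m c r (deriv a)" unfolding inH_def by (intro exI[of _ U]) (auto intro: holomorphic_deriv)
  have "\<exists>\<phi>. (\<forall>j\<in>{1..m}. \<phi> j \<in> ball (c j) (r j)) \<and>
      (\<exists>W. open W \<and> (\<Union>j\<in>{1..m}. cball (c j) (r j)) \<subseteq> W \<and> ah holomorphic_on (W - \<phi> ` {1..m}))"
    using assms unfolding inM_def by (elim conjE exE) blast
  then obtain \<phi> W where \<phi>: "\<forall>j\<in>{1..m}. \<phi> j \<in> ball (c j) (r j)"
    and W: "open W" "(\<Union>j\<in>{1..m}. cball (c j) (r j)) \<subseteq> W" "ah holomorphic_on (W - \<phi> ` {1..m})"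
    by blast
  have "\<phi> ` {1..m} \<subseteq> Dint m c r" using \<phi> unfolding Dint_def by auto
  then have "Gam m c r \<inter> \<phi> ` {1..m} = {}" using Gam_disjoint_Dint by auto
  moreover have "Gam m c r \<subseteq> W" using W(2) Gam_subset_cballs by blast
  ultimately have "Gam m c r \<subseteq> W - \<phi> ` {1..m}" by auto
  moreover have "open (W - \<phi> ` {1..m})" using W(1) by (intro open_Diff finite_imp_closed) auto
  ultimately show "inH m c r (deriv ah)"
    unfolding inH_def using W(3) by (intro exI[of _ "W - \<phi> ` {1..m}"]) (auto intro: holomorphic_deriv)
qed

lemma prodH_inH:
  assumes "inH m c r (deriv a)" "inH m c r (deriv ah)"
    "inH m c r u" "inH m c r uh" "inH m c r w" "inH m c r wh"
  shows "inH m c r (fst (prodH m c r a ah (u, uh) (w, wh)))"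
    and "inH m c r (snd (prodH m c r a ah (u, uh) (w, wh)))"
  unfolding prodH_def Let_def fst_conv snd_conv
  by (intro inH_add inH_diff inH_mult proj_plus_inH proj_minus_inH assms)+

lemma eta_prodH_identities:
  assumes H: "inH m c r (deriv a)" "inH m c r (deriv ah)"
      "inH m c r u" "inH m c r uh" "inH m c r w" "inH m c r wh"
    and eta: "eta m c r a ah (u, uh) = (x, xh)"
    and prod: "prodH m c r a ah (u, uh) (w, wh) = (v, vh)"
  defines "S1 \<equiv> \<lambda>z. u z + uh z"
    and "T1 \<equiv> \<lambda>z. u z * deriv a z + uh z * deriv ah z"
    and "Tw \<equiv> \<lambda>z. w z * deriv a z + wh z * deriv ah z"
  shows "\<forall>\<^sub>F z in near_Gam. w z * x z + wh z * xh z - (v z + vh z) =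
      proj_minus m c r S1 z * proj_minus m c r Tw z - proj_plus m c r S1 z * proj_plus m c r Tw z"
    and "\<forall>\<^sub>F z in near_Gam. v z * deriv a z + vh z * deriv ah z =
      proj_plus m c r T1 z * proj_plus m c r Tw z - proj_minus m c r T1 z * proj_minus m c r Tw z"
proof -
  let ?P = "proj_plus m c r" and ?Q = "proj_minus m c r"
  have x: "x = (\<lambda>z. deriv a z * ?Q S1 z - ?Q T1 z)" "xh = (\<lambda>z. - deriv ah z * ?P S1 z + ?P T1 z)"
    using eta by (auto simp: eta_def Let_def S1_def T1_def)
  have v: "v = (\<lambda>z. w z * ?P (\<lambda>p. u p * deriv a p) z - u z * ?Q (\<lambda>p. w p * deriv a p) z
        - w z * ?Q (\<lambda>p. uh p * deriv ah p) z - u z * ?Q (\<lambda>p. wh p * deriv ah p) z)"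
    "vh = (\<lambda>z. wh z * ?P (\<lambda>p. uh p * deriv ah p) z - uh z * ?Q (\<lambda>p. wh p * deriv ah p) z
        + uh z * ?P (\<lambda>p. w p * deriv a p) z + wh z * ?P (\<lambda>p. u p * deriv a p) z)"
    using prod by (auto simp: prodH_def Let_def)
  have H': "inH m c r (\<lambda>p. u p * deriv a p)" "inH m c r (\<lambda>p. uh p * deriv ah p)"
      "inH m c r (\<lambda>p. w p * deriv a p)" "inH m c r (\<lambda>p. wh p * deriv ah p)"
    using H by (auto intro: inH_mult)
  have "inH m c r S1" unfolding S1_def using H by (intro inH_add)
  note split = proj_split(3)[OF H'(1)] proj_split(3)[OF H'(2)] proj_split(3)[OF H'(3)]
    proj_split(3)[OF H'(4)] proj_split(3)[OF this]
  note lin = proj_add[OF H'(1,2), folded T1_def] proj_add[OF H'(3,4), folded Tw_def]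
  have "\<forall>\<^sub>F z in near_Gam.
      w z * x z + wh z * xh z - (v z + vh z) = ?Q S1 z * ?Q Tw z - ?P S1 z * ?P Tw z \<and>
      v z * deriv a z + vh z * deriv ah z = ?P T1 z * ?P Tw z - ?Q T1 z * ?Q Tw z"
    using split lin
  proof eventually_elim
    case (elim z)
    have "?P S1 z + ?Q S1 z = u z + uh z" using elim(5) by (simp add: S1_def)
    then show ?case
      using prodH_ring_identities[OF elim(1-4)] elim(6,7) unfolding x v by simp
  qed
  then show "\<forall>\<^sub>F z in near_Gam. w z * x z + wh z * xh z - (v z + vh z) =
      ?Q S1 z * ?Q Tw z - ?P S1 z * ?P Tw z"
    and "\<forall>\<^sub>F z in near_Gam. v z * deriv a z + vh z * deriv ah z =
      ?P T1 z * ?P Tw z - ?Q T1 z * ?Q Tw z"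
    by (simp_all add: eventually_conj_iff)
qed

lemma eta_prodH_projections:
  assumes H: "inH m c r (deriv a)" "inH m c r (deriv ah)"
      "inH m c r u" "inH m c r uh" "inH m c r w" "inH m c r wh"
    and eta: "eta m c r a ah (u, uh) = (x, xh)"
    and prod: "prodH m c r a ah (u, uh) (w, wh) = (v, vh)"
  defines "S1 \<equiv> \<lambda>z. u z + uh z"
    and "T1 \<equiv> \<lambda>z. u z * deriv a z + uh z * deriv ah z"
    and "Tw \<equiv> \<lambda>z. w z * deriv a z + wh z * deriv ah z"
    and "Y \<equiv> \<lambda>z. w z * x z + wh z * xh z"
    and "V \<equiv> \<lambda>z. v z + vh z"
    and "K \<equiv> \<lambda>z. v z * deriv a z + vh z * deriv ah z"
  shows "\<forall>\<^sub>F z in near_Gam.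
      proj_plus m c r Y z = proj_plus m c r V z - proj_plus m c r S1 z * proj_plus m c r Tw z \<and>
      proj_minus m c r Y z = proj_minus m c r V z + proj_minus m c r S1 z * proj_minus m c r Tw z"
    and "\<forall>\<^sub>F z in near_Gam.
      proj_plus m c r K z = proj_plus m c r T1 z * proj_plus m c r Tw z \<and>
      proj_minus m c r K z = - (proj_minus m c r T1 z * proj_minus m c r Tw z)"
proof -
  let ?P = "proj_plus m c r" and ?Q = "proj_minus m c r"
  have HV: "inH m c r V" unfolding V_def using prodH_inH[OF H] prod by (auto intro: inH_add)
  have HS: "inH m c r S1" "inH m c r T1" "inH m c r Tw"
    unfolding S1_def T1_def Tw_def using H by (auto intro!: inH_add inH_mult)
  note ids = eta_prodH_identities[OF H eta prod, folded S1_def T1_def Tw_def]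
  show "\<forall>\<^sub>F z in near_Gam. ?P Y z = ?P V z - ?P S1 z * ?P Tw z \<and> ?Q Y z = ?Q V z + ?Q S1 z * ?Q Tw z"
  proof (rule proj_unique)
    show "H_plus (\<lambda>z. ?P V z - ?P S1 z * ?P Tw z)"
      by (intro H_plus_diff H_plus_mult proj_split HV HS)
    show "H_minus (\<lambda>z. ?Q V z + ?Q S1 z * ?Q Tw z)"
      by (intro H_minus_add H_minus_mult proj_split HV HS)
    show "\<forall>\<^sub>F z in near_Gam. Y z = (?P V z - ?P S1 z * ?P Tw z) + (?Q V z + ?Q S1 z * ?Q Tw z)"
      using ids(1) proj_split(3)[OF HV] unfolding Y_def V_def by eventually_elim (simp add: algebra_simps)
  qed
  show "\<forall>\<^sub>F z in near_Gam. ?P K z = ?P T1 z * ?P Tw z \<and> ?Q K z = - (?Q T1 z * ?Q Tw z)"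
  proof (rule proj_unique)
    show "H_plus (\<lambda>z. ?P T1 z * ?P Tw z)" by (intro H_plus_mult proj_split HS)
    show "H_minus (\<lambda>z. - (?Q T1 z * ?Q Tw z))" by (intro H_minus_uminus H_minus_mult proj_split HS)
    show "\<forall>\<^sub>F z in near_Gam. K z = ?P T1 z * ?P Tw z + - (?Q T1 z * ?Q Tw z)"
      using ids(2) unfolding K_def by eventually_elim simp
  qed
qed

lemma Cxi_eta_eq_eta_prodH:
  assumes H: "inH m c r (deriv a)" "inH m c r (deriv ah)"
      "inH m c r u" "inH m c r uh" "inH m c r w" "inH m c r wh"
  shows "germ_eq2 m c r (Cxi m c r a ah (eta m c r a ah (u, uh)) (w, wh))
           (eta m c r a ah (prodH m c r a ah (u, uh) (w, wh)))"
proof -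
  let ?P = "proj_plus m c r" and ?Q = "proj_minus m c r"
  obtain x xh where eta: "eta m c r a ah (u, uh) = (x, xh)" by (cases "eta m c r a ah (u, uh)")
  obtain v vh where prod: "prodH m c r a ah (u, uh) (w, wh) = (v, vh)"
    by (cases "prodH m c r a ah (u, uh) (w, wh)")
  define S1 T1 Tw where "S1 = (\<lambda>z. u z + uh z)"
    and "T1 = (\<lambda>z. u z * deriv a z + uh z * deriv ah z)"
    and "Tw = (\<lambda>z. w z * deriv a z + wh z * deriv ah z)"
  define Y V K where "Y = (\<lambda>z. w z * x z + wh z * xh z)" and "V = (\<lambda>z. v z + vh z)"
    and "K = (\<lambda>z. v z * deriv a z + vh z * deriv ah z)"
  have x: "x = (\<lambda>z. deriv a z * ?Q S1 z - ?Q T1 z)" "xh = (\<lambda>z. - deriv ah z * ?P S1 z + ?P T1 z)"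
    using eta by (auto simp: eta_def Let_def S1_def T1_def)
  note projs = eta_prodH_projections[OF H eta prod,
      folded S1_def T1_def Tw_def Y_def V_def K_def]
  have "\<forall>\<^sub>F z in near_Gam.
      deriv a z * ?Q Y z - x z * ?Q Tw z = deriv a z * ?Q V z - ?Q K z \<and>
      - deriv ah z * ?P Y z + xh z * ?P Tw z = - deriv ah z * ?P V z + ?P K z"
    using projs
  proof eventually_elim
    case (elim z)
    then have e: "?P Y z = ?P V z - ?P S1 z * ?P Tw z" "?Q Y z = ?Q V z + ?Q S1 z * ?Q Tw z"
      "?P K z = ?P T1 z * ?P Tw z" "?Q K z = - (?Q T1 z * ?Q Tw z)" by auto
    show ?case unfolding x e by (simp add: algebra_simps)
  qed
  then show ?thesis
    unfolding germ_eq2_def germ_eq_iff_eventually eta prod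
    unfolding Cxi_def eta_def Let_def fst_conv snd_conv
    unfolding Y_def[symmetric] V_def[symmetric] K_def[symmetric] Tw_def[symmetric]
    by (simp add: eventually_conj_iff)
qed

lemma Cxi_germ_cong:
  assumes "germ_eq2 m c r \<xi> \<xi>'"
  shows "germ_eq2 m c r (Cxi m c r a ah \<xi> \<omega>) (Cxi m c r a ah \<xi>' \<omega>)"
proof -
  let ?s = "\<lambda>\<xi> z. fst \<omega> z * fst \<xi> z + snd \<omega> z * snd \<xi> z"
    and ?t = "\<lambda>z. fst \<omega> z * deriv a z + snd \<omega> z * deriv ah z"
  have eq: "\<forall>\<^sub>F z in near_Gam. fst \<xi> z = fst \<xi>' z \<and> snd \<xi> z = snd \<xi>' z"
    using assms unfolding germ_eq2_def germ_eq_iff_eventually by (simp add: eventually_conj_iff)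
  then have "\<forall>\<^sub>F z in near_Gam. ?s \<xi> z = ?s \<xi>' z" by eventually_elim simp
  with eq have "\<forall>\<^sub>F z in near_Gam. fst \<xi> z = fst \<xi>' z \<and> snd \<xi> z = snd \<xi>' z \<and>
      proj_plus m c r (?s \<xi>) z = proj_plus m c r (?s \<xi>') z \<and>
      proj_minus m c r (?s \<xi>) z = proj_minus m c r (?s \<xi>') z"
    using proj_cong by (simp add: eventually_conj_iff)
  then have "\<forall>\<^sub>F z in near_Gam.
      deriv a z * proj_minus m c r (?s \<xi>) z - fst \<xi> z * proj_minus m c r ?t z =
        deriv a z * proj_minus m c r (?s \<xi>') z - fst \<xi>' z * proj_minus m c r ?t z \<and>
      - deriv ah z * proj_plus m c r (?s \<xi>) z + snd \<xi> z * proj_plus m c r ?t z =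
        - deriv ah z * proj_plus m c r (?s \<xi>') z + snd \<xi>' z * proj_plus m c r ?t z"
    by eventually_elim simp
  then show ?thesis
    unfolding germ_eq2_def germ_eq_iff_eventually Cxi_def Let_def fst_conv snd_conv
    by (simp add: eventually_conj_iff)
qed

end

theorem corollary2p8:
  fixes m :: nat and n :: "nat \<Rightarrow> nat" and d :: "nat \<Rightarrow> int"
    and c :: "nat \<Rightarrow> complex" and r :: "nat \<Rightarrow> real"
    and a ah :: "complex \<Rightarrow> complex"
    and \<xi> \<omega>1 \<omega> :: "(complex \<Rightarrow> complex) \<times> (complex \<Rightarrow> complex)"
  assumes "m \<ge> 1"
    and "\<forall>j\<in>{0..m}. n j > 0"
    and "\<forall>j\<in>{1..m}. d j \<noteq> 0"
    and "\<forall>j\<in>{1..m}. r j > 0"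
    and "\<forall>i\<in>{1..m}. \<forall>j\<in>{1..m}. i \<noteq> j \<longrightarrow> cball (c i) (r i) \<inter> cball (c j) (r j) = {}"
    and "inM m n d c r a ah"
    and "inH m c r (fst \<omega>1)" and "inH m c r (snd \<omega>1)"
    and "germ_eq2 m c r \<xi> (eta m c r a ah \<omega>1)"
    and "inH m c r (fst \<omega>)" and "inH m c r (snd \<omega>)"
  shows "germ_eq2 m c r (Cxi m c r a ah \<xi> \<omega>) (eta m c r a ah (prodH m c r a ah \<omega>1 \<omega>))"
proof -
  interpret disk_system m c r using assms(4,5) by unfold_locales
  obtain u uh where \<omega>1: "\<omega>1 = (u, uh)" by (cases \<omega>1)
  obtain w wh where \<omega>: "\<omega> = (w, wh)" by (cases \<omega>)
  have "germ_eq2 m c r (Cxi m c r a ah \<xi> \<omega>) (Cxi m c r a ah (eta m c r a ah \<omega>1) \<omega>)"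
    using assms(9) by (rule Cxi_germ_cong)
  moreover have "germ_eq2 m c r (Cxi m c r a ah (eta m c r a ah \<omega>1) \<omega>) (eta m c r a ah (prodH m c r a ah \<omega>1 \<omega>))"
    unfolding \<omega>1 \<omega> using inM_deriv_inH[OF assms(6)] assms(7,8,10,11) \<omega>1 \<omega>
    by (intro Cxi_eta_eq_eta_prodH) auto
  ultimately show ?thesis by (rule germ_eq2_trans)
qed

end
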